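(* Let $W\in\mathbb{R}^{m\times n}$ have rows $w_1,\dots,w_m$ that are iid $\mathcal{N}(0,I_n)$ random vectors, and for each $i$ let $E_i$ be the event $\langle w_i,\sum_{k=1}^m w_k\rangle\ge 0$. Let $m,n\to\infty$ with $m/n=c$. Then for fixed $i\ne j$, $\mathbb{P}(E_i\cap E_j)\to\frac14\mathrm{erfc}\!\left(-\frac{1}{\sqrt{2c}}\right)^2$.
   Context: $\mathrm{erfc}(z)=1-\frac{2}{\sqrt\pi}\int_0^z e^{-t^2}\,dt$. *)

theory Defs
  imports "HOL-Probability.Probability"
begin

definition erfc :: "real \<Rightarrow> real" where
  "erfc z = 1 - 2 / sqrt pi * (LBINT t=ereal 0..ereal z. exp (- (t^2)))"

text \<open>Law of an m x n matrix W with iid standard normal entries; W(k,l) is the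
  l-th coordinate of the row w_k.\<close>
definition gauss_matrix :: "nat \<Rightarrow> nat \<Rightarrow> (nat \<times> nat \<Rightarrow> real) measure" where
  "gauss_matrix m n = PiM ({..<m} \<times> {..<n}) (\<lambda>_. density lborel std_normal_density)"

definition row_event :: "nat \<Rightarrow> nat \<Rightarrow> nat \<Rightarrow> (nat \<times> nat \<Rightarrow> real) set" where
  "row_event m n i = {W \<in> space (gauss_matrix m n).
      (\<Sum>l<n. W (i, l) * (\<Sum>k<m. W (k, l))) \<ge> 0}"

end

theory Submission
  imports Defs "HOL-Real_Asymp.Real_Asymp"
begin

(* Write the sum of all rows as w_i + w_j + r, where r is the sum of the other m - 2 rows, so
   that E_i and E_j read |w_i|^2 + <w_i,w_j> + <r,w_i> >= 0 and |w_j|^2 + <w_i,w_j> + <r,w_j> >= 0.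
   By Chebyshev's inequality, |w_i|^2 and |w_j|^2 are n (1 + o(1)), <w_i,w_j> is o(n) and |r|^2
   is n (m - 2) (1 + o(1)) with probability 1 - o(1). The vector r is independent of (w_i, w_j),
   and for fixed r the forms <r,w_i>, <r,w_j> are independent N(0, |r|^2); conditioning on r
   therefore gives P(E_i and E_j) = Phi(n / |r|)^2 + o(1) with n / |r| -> 1 / sqrt c, and
   Phi(x) = erfc(-x / sqrt 2) / 2. Quantitatively, all errors are controlled with relative
   accuracy d = n^(-1/4), for which the Chebyshev error O(1 / (d^2 n)) still vanishes. *)

abbreviation std_normal :: "real measure" where
  "std_normal \<equiv> density lborel std_normal_density"

lemma prob_space_std_normal: "prob_space std_normal"
  by (rule prob_space_normal_density) simp

lemma measure_std_normal_singleton: "measure std_normal {z} = 0"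
proof -
  have "AE x in lborel. x \<in> {z} \<longrightarrow> ennreal (std_normal_density x) = 0"
    using AE_lborel_singleton[of z] by eventually_elim auto
  then have "{z} \<in> null_sets std_normal"
    by (subst null_sets_density_iff) auto
  then show ?thesis
    by (simp add: measure_def null_setsD1)
qed

(* By symmetry of the normal density, Phi is the standard normal distribution function. *)
definition Phi :: "real \<Rightarrow> real" where
  "Phi x = measure std_normal {-x..}"

lemma Phi_nonneg: "0 \<le> Phi x"
  by (simp add: Phi_def)

lemma Phi_le_1: "Phi x \<le> 1"
  unfolding Phi_def by (rule prob_space.prob_le_1[OF prob_space_std_normal])

lemma Phi_mono:
  assumes "x \<le> y"
  shows "Phi x \<le> Phi y"
proof -
  interpret prob_space std_normal
    by (rule prob_space_std_normal)
  show ?thesis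
    unfolding Phi_def using assms by (intro finite_measure_mono) auto
qed

lemma Phi_eq_cdf: "Phi x = 1 - cdf std_normal (-x)"
proof -
  interpret prob_space std_normal
    by (rule prob_space_std_normal)
  have "Phi x = measure std_normal ({-x} \<union> {-x<..})"
    unfolding Phi_def by (intro arg_cong[where f = "measure std_normal"]) auto
  also have "\<dots> = measure std_normal {-x<..}"
    by (subst finite_measure_Union) (auto simp: measure_std_normal_singleton)
  also have "\<dots> = 1 - measure std_normal {..-x}"
    using prob_compl[of "{..-x}"] by (simp add: Compl_eq_Diff_UNIV[symmetric])
  finally show ?thesis
    by (simp add: cdf_def)
qed

lemma isCont_Phi: "isCont Phi x"
proof -
  interpret real_distribution std_normal
    by (simp add: real_distribution_def real_distribution_axioms_def prob_space_std_normal)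
  have "isCont (cdf std_normal) (-x)"
    by (simp add: isCont_cdf measure_std_normal_singleton)
  then have "isCont (\<lambda>x. 1 - cdf std_normal (-x)) x"
    by (intro continuous_intros continuous_at_compose[where f = uminus, unfolded o_def]) auto
  then show ?thesis
    by (simp add: Phi_eq_cdf[abs_def])
qed

lemma Phi_eq_set_integral: "Phi x = (LBINT s:{-x..}. std_normal_density s)"
proof -
  have "Phi x = integral\<^sup>L std_normal (indicator {-x..})"
    by (simp add: Phi_def)
  also have "\<dots> = (LBINT s:{-x..}. std_normal_density s)"
    by (subst integral_density) (auto simp: set_lebesgue_integral_def mult.commute)
  finally show ?thesis .
qed

lemma set_integral_std_normal_density_eq:
  "(LBINT s:S. std_normal_density s) = 1 / sqrt pi * (LBINT t:{t. sqrt 2 * t \<in> S}. exp (- t\<^sup>2))"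
proof -
  have "(LBINT s:S. std_normal_density s) = (\<integral>s. indicator S s * std_normal_density s \<partial>lborel)"
    by (simp add: set_lebesgue_integral_def)
  also have "\<dots> = \<bar>sqrt 2\<bar> *\<^sub>R (\<integral>t. indicator S (0 + sqrt 2 * t) * std_normal_density (0 + sqrt 2 * t) \<partial>lborel)"
    by (rule lborel_integral_real_affine) simp
  also have "(\<lambda>t. indicator S (0 + sqrt 2 * t) * std_normal_density (0 + sqrt 2 * t))
      = (\<lambda>t. 1 / sqrt (2 * pi) * (indicator {t. sqrt 2 * t \<in> S} t * exp (- t\<^sup>2)))"
    by (auto simp: std_normal_density_def power_mult_distrib indicator_def fun_eq_iff)
  finally show ?thesis
    by (simp add: set_lebesgue_integral_def real_sqrt_mult)
qed

lemma set_integral_std_normal_density_positive: "(LBINT s:{0<..}. std_normal_density s) = 1/2"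
proof -
  have "(LBINT t:{0<..}. exp (- t\<^sup>2)) = (LBINT t:{0::real..}. exp (- t\<^sup>2))"
    by (rule set_integral_discrete_difference[where X = "{0}"]) (auto simp: less_le)
  also have "\<dots> = sqrt pi / 2"
    using gaussian_moment_0 by (simp add: set_lebesgue_integral_def has_bochner_integral_integral_eq)
  finally have "(LBINT t:{0<..}. exp (- t\<^sup>2)) = sqrt pi / 2" .
  moreover have "{t. sqrt 2 * t \<in> {0<..}} = {0::real<..}"
    by (auto simp: zero_less_mult_iff)
  ultimately show ?thesis
    by (simp add: set_integral_std_normal_density_eq)
qed

lemma erfc_neg_eq_set_integral:
  assumes "0 \<le> a"
  shows "erfc (- a) = 1 + 2 / sqrt pi * (LBINT t:{-a..0}. exp (- t\<^sup>2))"
proof -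
  have "(LBINT t=ereal 0..ereal (-a). exp (- t\<^sup>2)) = - (LBINT t=ereal (-a)..ereal 0. exp (- t\<^sup>2))"
    by (rule interval_integral_endpoints_reverse)
  also have "(LBINT t=ereal (-a)..ereal 0. exp (- t\<^sup>2)) = (LBINT t:{-a..0}. exp (- t\<^sup>2))"
    using assms by (intro interval_integral_Icc) simp
  finally show ?thesis
    by (simp add: erfc_def)
qed

lemma Phi_eq_erfc:
  assumes "0 \<le> x"
  shows "Phi x = erfc (- x / sqrt 2) / 2"
proof -
  have integrable: "set_integrable lborel A std_normal_density" if "A \<in> sets lborel" for A
    unfolding set_integrable_def using that by (intro integrable_mult_indicator) auto
  have "{-x..} = {-x..0} \<union> {0<..}"
    using assms by auto
  then have "Phi x = (LBINT s:{-x..0}. std_normal_density s) + (LBINT s:{0<..}. std_normal_density s)"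
    unfolding Phi_eq_set_integral by (simp only:) (rule set_integral_Un, auto intro: integrable)
  also have "{t. sqrt 2 * t \<in> {-x..0}} = {- x / sqrt 2..0}"
    by (auto simp: field_simps mult_le_0_iff)
  then have "(LBINT s:{-x..0}. std_normal_density s) = 1 / sqrt pi * (LBINT t:{- x / sqrt 2..0}. exp (- t\<^sup>2))"
    by (simp add: set_integral_std_normal_density_eq)
  finally show ?thesis
    using erfc_neg_eq_set_integral[of "x / sqrt 2"] assms
    by (simp add: set_integral_std_normal_density_positive add_divide_distrib)
qed

context prob_space
begin

lemma centered_normal_moments:
  assumes X: "distributed M lborel X (normal_density 0 \<sigma>)" and "0 < \<sigma>"
  shows "integrable M (\<lambda>\<omega>. X \<omega> ^ 2)" "integrable M (\<lambda>\<omega>. X \<omega> ^ 4)"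
    and "expectation (\<lambda>\<omega>. X \<omega> ^ 2) = \<sigma>\<^sup>2" "expectation (\<lambda>\<omega>. X \<omega> ^ 4) = 3 * \<sigma> ^ 4"
proof -
  have moment: "integrable lborel (\<lambda>x. normal_density 0 \<sigma> x * x ^ (2 * k))"
    "expectation (\<lambda>\<omega>. X \<omega> ^ (2 * k)) = fact (2 * k) / (2 ^ k * fact k) * \<sigma> ^ (2 * k)" for k
    using integrable_normal_moment[of \<sigma> 0 "2 * k"] integral_normal_moment_even[of \<sigma> 0 k] assms
      distributed_integral[OF X, of "\<lambda>x. x ^ (2 * k)"] by (simp_all add: power_divide power_mult)
  show "integrable M (\<lambda>\<omega>. X \<omega> ^ 2)" "integrable M (\<lambda>\<omega>. X \<omega> ^ 4)"
    using distributed_integrable[OF X, of "\<lambda>x. x ^ 2"] distributed_integrable[OF X, of "\<lambda>x. x ^ 4"]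
      moment(1)[of 1] moment(1)[of 2] by simp_all
  show "expectation (\<lambda>\<omega>. X \<omega> ^ 2) = \<sigma>\<^sup>2" "expectation (\<lambda>\<omega>. X \<omega> ^ 4) = 3 * \<sigma> ^ 4"
    using moment(2)[of 1] moment(2)[of 2] by (simp_all add: fact_numeral)
qed

lemma prob_centered_normal_ge:
  assumes X: "distributed M lborel X (normal_density 0 \<sigma>)" and \<sigma>: "0 < \<sigma>"
  shows "prob {\<omega> \<in> space M. -a \<le> X \<omega>} = Phi (a / \<sigma>)"
proof -
  let ?Z = "\<lambda>\<omega>. (X \<omega> - 0) / \<sigma>"
  have Z: "distributed M lborel ?Z std_normal_density"
    using normal_standard_normal_convert[OF \<sigma>] X by simp
  then have distr: "distr M lborel ?Z = std_normal" and "?Z \<in> measurable M lborel"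
    by (simp_all add: distributed_def)
  then have "measure (distr M lborel ?Z) {-(a / \<sigma>)..} = prob (?Z -` {-(a / \<sigma>)..} \<inter> space M)"
    by (intro measure_distr) auto
  then have "measure std_normal {-(a / \<sigma>)..} = prob (?Z -` {-(a / \<sigma>)..} \<inter> space M)"
    by (simp only: distr)
  also have "?Z -` {-(a / \<sigma>)..} \<inter> space M = {\<omega> \<in> space M. -a \<le> X \<omega>}"
    using \<sigma> by (auto simp: field_simps)
  finally show ?thesis
    by (simp add: Phi_def)
qed

lemma
  fixes X :: "'i \<Rightarrow> 'a \<Rightarrow> real"
  assumes "finite L" and indep: "indep_vars (\<lambda>_. borel) X L"
    and square_integrable: "\<And>l. l \<in> L \<Longrightarrow> integrable M (\<lambda>\<omega>. (X l \<omega>)\<^sup>2)"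
    and centered: "\<And>l. l \<in> L \<Longrightarrow> expectation (X l) = 0"
  shows expectation_square_indep_sum:
      "expectation (\<lambda>\<omega>. (\<Sum>l\<in>L. X l \<omega>)\<^sup>2) = (\<Sum>l\<in>L. expectation (\<lambda>\<omega>. (X l \<omega>)\<^sup>2))"
    and integrable_square_indep_sum: "integrable M (\<lambda>\<omega>. (\<Sum>l\<in>L. X l \<omega>)\<^sup>2)"
proof -
  have integrable: "integrable M (X l)" if "l \<in> L" for l
    using square_integrable_imp_integrable[OF _ square_integrable[OF that]] indep that
    by (auto simp: indep_vars_def)
  have product: "integrable M (\<lambda>\<omega>. X l \<omega> * X l' \<omega>)
      \<and> expectation (\<lambda>\<omega>. X l \<omega> * X l' \<omega>) = (if l = l' then expectation (\<lambda>\<omega>. (X l \<omega>)\<^sup>2) else 0)"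
    if "l \<in> L" "l' \<in> L" for l l'
  proof (cases "l = l'")
    case True
    then show ?thesis
      using square_integrable[OF that(1)] by (simp add: power2_eq_square)
  next
    case False
    have "indep_vars (\<lambda>_. borel) X {l, l'}"
      by (rule indep_vars_subset[OF indep]) (use that in auto)
    then show ?thesis
      using indep_vars_lebesgue_integral[of "{l, l'}" X] indep_vars_integrable[of "{l, l'}" X]
        False that integrable centered by auto
  qed
  have square_sum: "(\<Sum>l\<in>L. X l \<omega>)\<^sup>2 = (\<Sum>l\<in>L. \<Sum>l'\<in>L. X l \<omega> * X l' \<omega>)" for \<omega>
    by (simp add: power2_eq_square sum_product)
  show "integrable M (\<lambda>\<omega>. (\<Sum>l\<in>L. X l \<omega>)\<^sup>2)"
    unfolding square_sum using product by auto
  show "expectation (\<lambda>\<omega>. (\<Sum>l\<in>L. X l \<omega>)\<^sup>2) = (\<Sum>l\<in>L. expectation (\<lambda>\<omega>. (X l \<omega>)\<^sup>2))"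
    unfolding square_sum using product \<open>finite L\<close>
    by (simp add: Bochner_Integration.integral_sum cong: sum.cong)
qed

lemma prob_indep_sum_deviation_le:
  fixes X :: "'i \<Rightarrow> 'a \<Rightarrow> real"
  assumes "finite L" and indep: "indep_vars (\<lambda>_. borel) X L"
    and "\<And>l. l \<in> L \<Longrightarrow> integrable M (\<lambda>\<omega>. (X l \<omega>)\<^sup>2)"
    and centered: "\<And>l. l \<in> L \<Longrightarrow> expectation (X l) = 0"
    and "0 < a"
  shows "prob {\<omega> \<in> space M. a \<le> \<bar>\<Sum>l\<in>L. X l \<omega>\<bar>} \<le> (\<Sum>l\<in>L. expectation (\<lambda>\<omega>. (X l \<omega>)\<^sup>2)) / a\<^sup>2"
proof -
  have measurable: "random_variable borel (X l)" if "l \<in> L" for l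
    using indep that by (auto simp: indep_vars_def)
  have "integrable M (X l)" if "l \<in> L" for l
    by (rule square_integrable_imp_integrable[OF measurable[OF that] assms(3)[OF that]])
  then have "expectation (\<lambda>\<omega>. \<Sum>l\<in>L. X l \<omega>) = 0"
    using centered by (simp add: Bochner_Integration.integral_sum)
  moreover have "prob {\<omega> \<in> space M. a \<le> \<bar>(\<Sum>l\<in>L. X l \<omega>) - expectation (\<lambda>\<omega>. \<Sum>l\<in>L. X l \<omega>)\<bar>}
      \<le> variance (\<lambda>\<omega>. \<Sum>l\<in>L. X l \<omega>) / a\<^sup>2"
    using measurable assms by (intro Chebyshev_inequality integrable_square_indep_sum) auto
  ultimately show ?thesis
    using expectation_square_indep_sum[OF assms(1-4)] by simp
qed

lemma
  assumes indep: "indep_var N Y N' X" and A: "A \<in> sets (N \<Otimes>\<^sub>M N')"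
  shows prob_indep_pair_eq_expectation:
      "prob {\<omega> \<in> space M. (Y \<omega>, X \<omega>) \<in> A} = expectation (\<lambda>\<omega>. prob {\<omega>' \<in> space M. (Y \<omega>, X \<omega>') \<in> A})"
    and integrable_prob_slice: "integrable M (\<lambda>\<omega>. prob {\<omega>' \<in> space M. (Y \<omega>, X \<omega>') \<in> A})"
proof -
  have Y: "random_variable N Y" and X: "random_variable N' X"
    using indep_var_rv1[OF indep] indep_var_rv2[OF indep] .
  interpret DX: prob_space "distr M N' X"
    by (rule prob_space_distr[OF X])
  interpret DY: prob_space "distr M N Y"
    by (rule prob_space_distr[OF Y])
  have A': "A \<in> sets (distr M N Y \<Otimes>\<^sub>M distr M N' X)"
    using A by simp
  have slice: "emeasure (distr M N' X) (Pair y -` A) = prob {\<omega>' \<in> space M. (y, X \<omega>') \<in> A}" for y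
  proof -
    have "emeasure (distr M N' X) (Pair y -` A) = emeasure M (X -` (Pair y -` A) \<inter> space M)"
      using sets_Pair1[OF A] by (rule emeasure_distr[OF X])
    also have "X -` (Pair y -` A) \<inter> space M = {\<omega>' \<in> space M. (y, X \<omega>') \<in> A}"
      by auto
    finally show ?thesis
      by (simp add: emeasure_eq_measure)
  qed
  have slice_measurable: "(\<lambda>y. emeasure (distr M N' X) (Pair y -` A)) \<in> borel_measurable N"
    using DX.measurable_emeasure_Pair[OF A'] by simp
  then have "(\<lambda>\<omega>. enn2real (emeasure (distr M N' X) (Pair (Y \<omega>) -` A))) \<in> borel_measurable M"
    using Y by measurable
  then show integrable: "integrable M (\<lambda>\<omega>. prob {\<omega>' \<in> space M. (Y \<omega>, X \<omega>') \<in> A})"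
    by (intro integrable_const_bound[where B = 1]) (auto simp: slice)
  have "ennreal (prob {\<omega> \<in> space M. (Y \<omega>, X \<omega>) \<in> A})
      = emeasure (distr M (N \<Otimes>\<^sub>M N') (\<lambda>\<omega>. (Y \<omega>, X \<omega>))) A"
    using A X Y by (simp add: emeasure_distr emeasure_eq_measure vimage_def Int_def conj_commute)
  also have "distr M (N \<Otimes>\<^sub>M N') (\<lambda>\<omega>. (Y \<omega>, X \<omega>)) = distr M N Y \<Otimes>\<^sub>M distr M N' X"
    using indep by (simp add: indep_var_distribution_eq)
  also have "emeasure (distr M N Y \<Otimes>\<^sub>M distr M N' X) A
      = (\<integral>\<^sup>+y. emeasure (distr M N' X) (Pair y -` A) \<partial>distr M N Y)"
    by (rule DX.emeasure_pair_measure_alt[OF A'])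
  also have "\<dots> = (\<integral>\<^sup>+\<omega>. prob {\<omega>' \<in> space M. (Y \<omega>, X \<omega>') \<in> A} \<partial>M)"
    using slice_measurable by (simp add: nn_integral_distr[OF Y] slice)
  also have "\<dots> = expectation (\<lambda>\<omega>. prob {\<omega>' \<in> space M. (Y \<omega>, X \<omega>') \<in> A})"
    by (rule nn_integral_eq_integral[OF integrable]) auto
  finally show "prob {\<omega> \<in> space M. (Y \<omega>, X \<omega>) \<in> A} = expectation (\<lambda>\<omega>. prob {\<omega>' \<in> space M. (Y \<omega>, X \<omega>') \<in> A})"
    by (simp add: integral_nonneg_AE)
qed

lemma prob_indep_pair_le:
  assumes indep: "indep_var N Y N' X" and A: "A \<in> sets (N \<Otimes>\<^sub>M N')" and B: "B \<in> sets N"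
    and "0 \<le> u" and slice_le: "\<And>y. y \<in> B \<Longrightarrow> prob {\<omega>' \<in> space M. (y, X \<omega>') \<in> A} \<le> u"
  shows "prob {\<omega> \<in> space M. (Y \<omega>, X \<omega>) \<in> A} \<le> u + prob {\<omega> \<in> space M. Y \<omega> \<notin> B}"
proof -
  have Y: "random_variable N Y"
    by (rule indep_var_rv1[OF indep])
  have outside: "{\<omega> \<in> space M. Y \<omega> \<notin> B} \<in> events"
    using Y B by measurable
  then have outside_integrable: "integrable M (indicator {\<omega> \<in> space M. Y \<omega> \<notin> B} :: 'a \<Rightarrow> real)"
    by (simp add: emeasure_eq_measure)
  then have "expectation (\<lambda>\<omega>. prob {\<omega>' \<in> space M. (Y \<omega>, X \<omega>') \<in> A})
      \<le> expectation (\<lambda>\<omega>. u + indicator {\<omega> \<in> space M. Y \<omega> \<notin> B} \<omega>)"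
    using slice_le \<open>0 \<le> u\<close>
    by (intro integral_mono[OF integrable_prob_slice[OF indep A]]
        Bochner_Integration.integrable_add[OF integrable_const outside_integrable])
      (auto simp: indicator_def intro: order_trans[OF prob_le_1])
  then show ?thesis
    using outside_integrable outside
    by (simp add: prob_indep_pair_eq_expectation[OF indep A] prob_space emeasure_eq_measure)
qed

lemma prob_indep_pair_ge:
  assumes indep: "indep_var N Y N' X" and A: "A \<in> sets (N \<Otimes>\<^sub>M N')" and B: "B \<in> sets N"
    and "l \<le> 1" and slice_ge: "\<And>y. y \<in> B \<Longrightarrow> l \<le> prob {\<omega>' \<in> space M. (y, X \<omega>') \<in> A}"
  shows "l - prob {\<omega> \<in> space M. Y \<omega> \<notin> B} \<le> prob {\<omega> \<in> space M. (Y \<omega>, X \<omega>) \<in> A}"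
proof -
  have Y: "random_variable N Y"
    by (rule indep_var_rv1[OF indep])
  have outside: "{\<omega> \<in> space M. Y \<omega> \<notin> B} \<in> events"
    using Y B by measurable
  then have outside_integrable: "integrable M (indicator {\<omega> \<in> space M. Y \<omega> \<notin> B} :: 'a \<Rightarrow> real)"
    by (simp add: emeasure_eq_measure)
  then have "expectation (\<lambda>\<omega>. l - indicator {\<omega> \<in> space M. Y \<omega> \<notin> B} \<omega>)
      \<le> expectation (\<lambda>\<omega>. prob {\<omega>' \<in> space M. (Y \<omega>, X \<omega>') \<in> A})"
    using slice_ge \<open>l \<le> 1\<close>
    by (intro integral_mono[OF _ integrable_prob_slice[OF indep A]]
        Bochner_Integration.integrable_diff[OF integrable_const outside_integrable])
      (auto simp: indicator_def intro: order_trans[OF _ measure_nonneg])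
  then show ?thesis
    using outside_integrable outside
    by (simp add: prob_indep_pair_eq_expectation[OF indep A] prob_space emeasure_eq_measure)
qed

end

lemma borel_measurable_PiM_coordinate [measurable]:
  "(\<lambda>\<omega>. \<omega> q) \<in> borel_measurable (PiM J (\<lambda>_. borel :: real measure))"
proof (cases "q \<in> J")
  case True
  then show ?thesis
    by measurable
next
  case False
  then have "\<omega> q = undefined" if "\<omega> \<in> space (PiM J (\<lambda>_. borel :: real measure))" for \<omega>
    using that by (auto simp: space_PiM PiE_def extensional_def)
  then show ?thesis
    by (subst measurable_cong[where g = "\<lambda>_. undefined"]) auto
qed

locale iid_std_normal = prob_space M for M :: "('i \<Rightarrow> real) measure" +
  fixes I :: "'i set"
  assumes M_eq: "M = PiM I (\<lambda>_. std_normal)"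
begin

lemma sets_M [measurable_cong]: "sets M = sets (PiM I (\<lambda>_. borel))"
  unfolding M_eq by (intro sets_PiM_cong) auto

lemma distributed_coordinate:
  assumes "q \<in> I"
  shows "distributed M lborel (\<lambda>\<omega>. \<omega> q) std_normal_density"
proof -
  have "distr M lborel (\<lambda>\<omega>. \<omega> q) = distr (PiM I (\<lambda>_. std_normal)) std_normal (\<lambda>\<omega>. \<omega> q)"
    unfolding M_eq by (rule distr_cong) auto
  also have "\<dots> = std_normal"
    by (rule distr_PiM_component[OF prob_space_std_normal assms])
  finally show ?thesis
    by (auto simp: distributed_def)
qed

lemma indep_vars_coordinates: "indep_vars (\<lambda>_. borel) (\<lambda>q \<omega>. \<omega> q) I"
proof (cases "I = {}")
  case True
  then show ?thesis
    by (simp add: indep_vars_def indep_sets_def)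
next
  case False
  have "distr M (PiM I (\<lambda>_. borel)) (\<lambda>\<omega>. \<lambda>q\<in>I. \<omega> q) = distr M (PiM I (\<lambda>_. borel)) (\<lambda>\<omega>. \<omega>)"
    by (rule distr_cong) (auto simp: M_eq space_PiM)
  also have "\<dots> = M"
    by (rule distr_id2) (simp add: sets_M)
  also have "\<dots> = PiM I (\<lambda>q. distr M borel (\<lambda>\<omega>. \<omega> q))"
    using distributed_coordinate unfolding M_eq
    by (intro PiM_cong) (auto simp: distributed_def cong: distr_cong)
  finally show ?thesis
    by (subst indep_vars_iff_distr_eq_PiM'[OF False]) auto
qed

lemma indep_vars_blocks:
  assumes "\<And>l. l \<in> L \<Longrightarrow> K l \<subseteq> I" and "disjoint_family_on K L"
    and "\<And>l. l \<in> L \<Longrightarrow> f l \<in> borel_measurable (PiM (K l) (\<lambda>_. borel))"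
  shows "indep_vars (\<lambda>_. borel) (\<lambda>l \<omega>. f l (restrict \<omega> (K l))) L"
proof -
  have "indep_vars (\<lambda>l. PiM (K l) (\<lambda>_. borel)) (\<lambda>l \<omega>. restrict (\<lambda>q. \<omega> q) (K l)) L"
    by (rule indep_vars_restrict[OF indep_vars_coordinates assms(1,2)])
  then show ?thesis
    by (rule indep_vars_compose2) (use assms(3) in auto)
qed

lemma indep_var_blocks:
  assumes "A \<inter> B = {}" "A \<subseteq> I" "B \<subseteq> I"
    and "f \<in> measurable (PiM A (\<lambda>_. borel)) N" "g \<in> measurable (PiM B (\<lambda>_. borel)) N'"
  shows "indep_var N (\<lambda>\<omega>. f (restrict \<omega> A)) N' (\<lambda>\<omega>. g (restrict \<omega> B))"
  using indep_var_compose[OF indep_var_restrict[OF indep_vars_coordinates assms(1-3)] assms(4,5)]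
  by (simp add: o_def)

lemma distributed_linear_form:
  assumes "finite L" "inj_on q L" "q ` L \<subseteq> I" and "0 < (\<Sum>l\<in>L. (r l)\<^sup>2)"
  shows "distributed M lborel (\<lambda>\<omega>. \<Sum>l\<in>L. r l * \<omega> (q l)) (normal_density 0 (sqrt (\<Sum>l\<in>L. (r l)\<^sup>2)))"
proof -
  define L' where "L' = {l \<in> L. r l \<noteq> 0}"
  have sum_L': "(\<Sum>l\<in>L. f l) = (\<Sum>l\<in>L'. f l)" if "\<And>l. r l = 0 \<Longrightarrow> f l = 0" for f :: "'a \<Rightarrow> real"
    unfolding L'_def using \<open>finite L\<close> that by (intro sum.mono_neutral_right) auto
  have "L' \<noteq> {}"
    using sum_L'[of "\<lambda>l. (r l)\<^sup>2"] assms(4) by auto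
  have "indep_vars (\<lambda>_. borel) (\<lambda>l \<omega>. (\<lambda>y. r l * y (q l)) (restrict \<omega> {q l})) L'"
    using assms(2,3) by (intro indep_vars_blocks) (auto simp: L'_def disjoint_family_on_def inj_on_def)
  then have "indep_vars (\<lambda>_. borel) (\<lambda>l \<omega>. r l * \<omega> (q l)) L'"
    by (rule indep_vars_cong[THEN iffD1, rotated 3]) auto
  moreover have "distributed M lborel (\<lambda>\<omega>. r l * \<omega> (q l)) (normal_density 0 \<bar>r l\<bar>)" if "l \<in> L'" for l
    using normal_density_affine[OF distributed_coordinate, of "q l" "r l" 0] that assms(3)
    by (auto simp: L'_def)
  ultimately have "distributed M lborel (\<lambda>\<omega>. \<Sum>l\<in>L'. r l * \<omega> (q l))
      (normal_density (\<Sum>l\<in>L'. 0) (sqrt (\<Sum>l\<in>L'. \<bar>r l\<bar>\<^sup>2)))"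
    using \<open>finite L\<close> \<open>L' \<noteq> {}\<close> by (intro sum_indep_normal) (auto simp: L'_def)
  then show ?thesis
    by (simp add: sum_L'[of "\<lambda>l. r l * _ l"] sum_L'[of "\<lambda>l. (r l)\<^sup>2"])
qed

end

definition row_sum_sqnorm :: "'c set \<Rightarrow> 'r set \<Rightarrow> ('r \<times> 'c \<Rightarrow> real) \<Rightarrow> real" where
  "row_sum_sqnorm C K \<omega> = (\<Sum>l\<in>C. (\<Sum>k\<in>K. \<omega> (k, l))\<^sup>2)"

lemma borel_measurable_row_sum_sqnorm [measurable]:
  "row_sum_sqnorm C K \<in> borel_measurable (PiM J (\<lambda>_. borel :: real measure))"
  unfolding row_sum_sqnorm_def by measurable

definition typical_pair :: "'c set \<Rightarrow> 'r \<Rightarrow> 'r \<Rightarrow> real \<Rightarrow> ('r \<times> 'c \<Rightarrow> real) \<Rightarrow> bool" where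
  "typical_pair C i j a \<omega> \<longleftrightarrow>
     (\<forall>K \<in> {{i}, {j}, {i, j}}. \<bar>row_sum_sqnorm C K \<omega> - real (card C * card K)\<bar> < a)"

(* E_i and E_j written in terms of the rows i and j alone; the other rows enter only through
   their column sums s. *)
definition pair_event :: "'c set \<Rightarrow> 'r \<Rightarrow> 'r \<Rightarrow> ('c \<Rightarrow> real) \<Rightarrow> ('r \<times> 'c \<Rightarrow> real) \<Rightarrow> bool" where
  "pair_event C i j s \<omega> \<longleftrightarrow>
     0 \<le> (\<Sum>l\<in>C. \<omega> (i, l) * (\<omega> (i, l) + \<omega> (j, l) + s l)) \<and>
     0 \<le> (\<Sum>l\<in>C. \<omega> (j, l) * (\<omega> (i, l) + \<omega> (j, l) + s l))"

(* By polarization, <w_i,w_j> = (|w_i + w_j|^2 - |w_i|^2 - |w_j|^2) / 2, so typicality at level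
   a = 2 d n / 5 keeps |w_i|^2 + <w_i,w_j> and |w_j|^2 + <w_i,w_j> within 5 a / 2 = d n of n. *)
lemma
  fixes \<omega> :: "'r \<times> 'c \<Rightarrow> real" and d :: real
  assumes "i \<noteq> j" and typical: "typical_pair C i j (2/5 * d * card C) \<omega>"
  shows pair_event_imp_row_forms_ge: "pair_event C i j s \<omega> \<Longrightarrow>
      -((1 + d) * card C) \<le> (\<Sum>l\<in>C. s l * \<omega> (i, l)) \<and> -((1 + d) * card C) \<le> (\<Sum>l\<in>C. s l * \<omega> (j, l))"
    and row_forms_ge_imp_pair_event: "-((1 - d) * card C) \<le> (\<Sum>l\<in>C. s l * \<omega> (i, l)) \<Longrightarrow>
      -((1 - d) * card C) \<le> (\<Sum>l\<in>C. s l * \<omega> (j, l)) \<Longrightarrow> pair_event C i j s \<omega>"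
proof -
  define ij where "ij = (\<Sum>l\<in>C. \<omega> (i, l) * \<omega> (j, l))"
  have sqnorm: "row_sum_sqnorm C {k} \<omega> = (\<Sum>l\<in>C. \<omega> (k, l) * \<omega> (k, l))" for k
    by (simp add: row_sum_sqnorm_def power2_eq_square)
  have polarization: "row_sum_sqnorm C {i, j} \<omega> = row_sum_sqnorm C {i} \<omega> + row_sum_sqnorm C {j} \<omega> + 2 * ij"
    using \<open>i \<noteq> j\<close>
    by (simp add: row_sum_sqnorm_def ij_def power2_eq_square sum.distrib sum_distrib_left algebra_simps)
  have expand_i: "(\<Sum>l\<in>C. \<omega> (i, l) * (\<omega> (i, l) + \<omega> (j, l) + s l))
      = row_sum_sqnorm C {i} \<omega> + ij + (\<Sum>l\<in>C. s l * \<omega> (i, l))"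
    and expand_j: "(\<Sum>l\<in>C. \<omega> (j, l) * (\<omega> (i, l) + \<omega> (j, l) + s l))
      = row_sum_sqnorm C {j} \<omega> + ij + (\<Sum>l\<in>C. s l * \<omega> (j, l))"
    by (simp_all add: sqnorm ij_def sum.distrib distrib_left mult.commute)
  have "\<bar>row_sum_sqnorm C {i} \<omega> - card C\<bar> < 2/5 * d * card C"
    "\<bar>row_sum_sqnorm C {j} \<omega> - card C\<bar> < 2/5 * d * card C"
    "\<bar>row_sum_sqnorm C {i, j} \<omega> - 2 * card C\<bar> < 2/5 * d * card C"
    using typical \<open>i \<noteq> j\<close> by (simp_all add: typical_pair_def mult.commute)
  then show "pair_event C i j s \<omega> \<Longrightarrow>
      -((1 + d) * card C) \<le> (\<Sum>l\<in>C. s l * \<omega> (i, l)) \<and> -((1 + d) * card C) \<le> (\<Sum>l\<in>C. s l * \<omega> (j, l))"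
    and "-((1 - d) * card C) \<le> (\<Sum>l\<in>C. s l * \<omega> (i, l)) \<Longrightarrow>
      -((1 - d) * card C) \<le> (\<Sum>l\<in>C. s l * \<omega> (j, l)) \<Longrightarrow> pair_event C i j s \<omega>"
    unfolding pair_event_def expand_i expand_j polarization abs_less_iff
    by (auto simp: ring_distribs)
qed

locale std_normal_matrix = iid_std_normal M "R \<times> C"
  for M :: "('r \<times> 'c \<Rightarrow> real) measure" and R :: "'r set" and C :: "'c set" +
  assumes finite_columns: "finite C"
begin

lemma distributed_column_sum:
  assumes "finite K" "K \<noteq> {}" "K \<subseteq> R" "l \<in> C"
  shows "distributed M lborel (\<lambda>\<omega>. \<Sum>k\<in>K. \<omega> (k, l)) (normal_density 0 (sqrt (card K)))"
  using distributed_linear_form[of K "\<lambda>k. (k, l)" "\<lambda>_. 1"] assms by (auto simp: inj_on_def card_gt_0_iff)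

lemma prob_row_sum_sqnorm_deviation_le:
  assumes "finite K" "K \<noteq> {}" "K \<subseteq> R" "0 < a"
  shows "prob {\<omega> \<in> space M. a \<le> \<bar>row_sum_sqnorm C K \<omega> - card C * card K\<bar>} \<le> 2 * card C * (card K)\<^sup>2 / a\<^sup>2"
proof -
  define X :: "'c \<Rightarrow> ('r \<times> 'c \<Rightarrow> real) \<Rightarrow> real"
    where "X l \<omega> = (\<Sum>k\<in>K. \<omega> (k, l))\<^sup>2 - card K" for l \<omega>
  have "indep_vars (\<lambda>_. borel) (\<lambda>l \<omega>. (\<lambda>y. (\<Sum>k\<in>K. y (k, l))\<^sup>2 - real (card K)) (restrict \<omega> (K \<times> {l}))) C"
    using assms by (intro indep_vars_blocks) (auto simp: disjoint_family_on_def)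
  then have indep: "indep_vars (\<lambda>_. borel) X C"
    by (rule indep_vars_cong[THEN iffD1, rotated 3]) (auto simp: X_def)
  have square: "(X l \<omega>)\<^sup>2 = (\<Sum>k\<in>K. \<omega> (k, l)) ^ 4 - 2 * real (card K) * (\<Sum>k\<in>K. \<omega> (k, l))\<^sup>2 + (real (card K))\<^sup>2"
    for l and \<omega> :: "'r \<times> 'c \<Rightarrow> real"
    by (simp add: X_def power2_eq_square power4_eq_xxxx algebra_simps)
  have "integrable M (\<lambda>\<omega>. (X l \<omega>)\<^sup>2) \<and> expectation (X l) = 0 \<and> expectation (\<lambda>\<omega>. (X l \<omega>)\<^sup>2) = 2 * (card K)\<^sup>2"
    if "l \<in> C" for l
  proof -
    have "0 < sqrt (card K)"
      using assms by (simp add: card_gt_0_iff)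
    note moments = centered_normal_moments[OF distributed_column_sum[OF assms(1-3) that] this]
    have "sqrt (card K) ^ 4 = (real (card K))\<^sup>2"
      by (simp add: power4_eq_xxxx power2_eq_square)
    then show ?thesis
      using moments unfolding square by (simp add: X_def[abs_def] prob_space power2_eq_square)
  qed
  then have "prob {\<omega> \<in> space M. a \<le> \<bar>\<Sum>l\<in>C. X l \<omega>\<bar>} \<le> (\<Sum>l\<in>C. 2 * (card K)\<^sup>2) / a\<^sup>2"
    using prob_indep_sum_deviation_le[OF finite_columns indep _ _ \<open>0 < a\<close>] by simp
  then show ?thesis
    by (simp add: X_def row_sum_sqnorm_def sum_subtractf ac_simps)
qed

lemma prob_row_sum_sqnorm_relative_deviation_le:
  fixes d :: real
  assumes "finite K" "K \<noteq> {}" "K \<subseteq> R" "C \<noteq> {}" "0 < d"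
  shows "prob {\<omega> \<in> space M. d * (card C * card K) \<le> \<bar>row_sum_sqnorm C K \<omega> - card C * card K\<bar>}
    \<le> 2 / (d\<^sup>2 * card C)"
proof -
  have "0 < card C" "0 < card K"
    using assms finite_columns by (simp_all add: card_gt_0_iff)
  then have "prob {\<omega> \<in> space M. d * (card C * card K) \<le> \<bar>row_sum_sqnorm C K \<omega> - card C * card K\<bar>}
      \<le> 2 * card C * (card K)\<^sup>2 / (d * (card C * card K))\<^sup>2"
    using assms by (intro prob_row_sum_sqnorm_deviation_le) auto
  also have "\<dots> = 2 / (d\<^sup>2 * card C)"
    using \<open>0 < card C\<close> \<open>0 < card K\<close> \<open>0 < d\<close> by (simp add: field_simps power2_eq_square)
  finally show ?thesis .
qed

lemma prob_row_forms_ge: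
  assumes "i \<in> R" "j \<in> R" "i \<noteq> j" and "0 < (\<Sum>l\<in>C. (s l)\<^sup>2)"
  shows "prob {\<omega> \<in> space M. -x \<le> (\<Sum>l\<in>C. s l * \<omega> (i, l)) \<and> -x \<le> (\<Sum>l\<in>C. s l * \<omega> (j, l))}
    = (Phi (x / sqrt (\<Sum>l\<in>C. (s l)\<^sup>2)))\<^sup>2"
proof -
  have row_form: "prob {\<omega> \<in> space M. -x \<le> (\<Sum>l\<in>C. s l * \<omega> (k, l))} = Phi (x / sqrt (\<Sum>l\<in>C. (s l)\<^sup>2))"
    if "k \<in> R" for k
    using that assms finite_columns
    by (intro prob_centered_normal_ge distributed_linear_form) (auto simp: inj_on_def)
  have "indep_var borel (\<lambda>\<omega>. (\<lambda>y. \<Sum>l\<in>C. s l * y (i, l)) (restrict \<omega> ({i} \<times> C)))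
      borel (\<lambda>\<omega>. (\<lambda>y. \<Sum>l\<in>C. s l * y (j, l)) (restrict \<omega> ({j} \<times> C)))"
    using assms by (intro indep_var_blocks) auto
  then have "indep_var borel (\<lambda>\<omega>. \<Sum>l\<in>C. s l * \<omega> (i, l)) borel (\<lambda>\<omega>. \<Sum>l\<in>C. s l * \<omega> (j, l))"
    by simp
  from prob_indep_random_variable[OF this, of "{-x..}" "{-x..}"]
  show ?thesis
    using assms by (simp add: row_form power2_eq_square)
qed

lemma prob_not_typical_pair_le:
  assumes "i \<in> R" "j \<in> R" "i \<noteq> j" and "0 < a"
  shows "prob {\<omega> \<in> space M. \<not> typical_pair C i j a \<omega>} \<le> 12 * card C / a\<^sup>2"
proof -
  define deviates where
    "deviates K = {\<omega> \<in> space M. a \<le> \<bar>row_sum_sqnorm C K \<omega> - card C * card K\<bar>}" for K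
  have [measurable]: "deviates K \<in> events" for K
    unfolding deviates_def by measurable
  have deviates_le: "prob (deviates K) \<le> 2 * card C * (card K)\<^sup>2 / a\<^sup>2" if "K \<in> {{i}, {j}, {i, j}}" for K
    unfolding deviates_def using that assms by (intro prob_row_sum_sqnorm_deviation_le) auto
  have "{\<omega> \<in> space M. \<not> typical_pair C i j a \<omega>} = deviates {i} \<union> deviates {j} \<union> deviates {i, j}"
    by (auto simp: typical_pair_def deviates_def not_less)
  also have "prob \<dots> \<le> prob (deviates {i}) + prob (deviates {j}) + prob (deviates {i, j})"
    by (intro order_trans[OF measure_Un_le] add_mono measure_Un_le order_refl) auto
  also have "\<dots> \<le> 2 * card C / a\<^sup>2 + 2 * card C / a\<^sup>2 + 8 * card C / a\<^sup>2"
    using deviates_le[of "{i}"] deviates_le[of "{j}"] deviates_le[of "{i, j}"] \<open>i \<noteq> j\<close> by simp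
  finally show ?thesis
    by simp
qed

lemma pred_typical_pair [measurable]: "Measurable.pred M (typical_pair C i j a)"
  by (unfold typical_pair_def ball_simps) measurable

lemma pred_pair_event [measurable]: "Measurable.pred M (pair_event C i j s)"
  unfolding pair_event_def by measurable

lemma prob_pair_event_le:
  fixes d \<rho> :: real
  assumes "i \<in> R" "j \<in> R" "i \<noteq> j" "C \<noteq> {}" "0 < d" and "0 < \<rho>" "\<rho> \<le> (\<Sum>l\<in>C. (s l)\<^sup>2)"
  shows "prob {\<omega> \<in> space M. pair_event C i j s \<omega>} \<le> (Phi ((1 + d) * card C / sqrt \<rho>))\<^sup>2 + 75 / (d\<^sup>2 * card C)"
proof -
  let ?a = "2/5 * d * card C"
  let ?rows = "{\<omega> \<in> space M. -((1 + d) * card C) \<le> (\<Sum>l\<in>C. s l * \<omega> (i, l))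
      \<and> -((1 + d) * card C) \<le> (\<Sum>l\<in>C. s l * \<omega> (j, l))}"
  have "{\<omega> \<in> space M. pair_event C i j s \<omega>} \<subseteq> ?rows \<union> {\<omega> \<in> space M. \<not> typical_pair C i j ?a \<omega>}"
    using pair_event_imp_row_forms_ge[OF \<open>i \<noteq> j\<close>] by blast
  then have "prob {\<omega> \<in> space M. pair_event C i j s \<omega>} \<le> prob ?rows + prob {\<omega> \<in> space M. \<not> typical_pair C i j ?a \<omega>}"
    by (intro order_trans[OF finite_measure_mono measure_Un_le]) auto
  also have "prob ?rows \<le> (Phi ((1 + d) * card C / sqrt \<rho>))\<^sup>2"
  proof -
    have "(1 + d) * card C / sqrt (\<Sum>l\<in>C. (s l)\<^sup>2) \<le> (1 + d) * card C / sqrt \<rho>"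
      using assms by (intro divide_left_mono) auto
    then show ?thesis
      using assms by (simp add: prob_row_forms_ge power_mono Phi_mono Phi_nonneg)
  qed
  also have "prob {\<omega> \<in> space M. \<not> typical_pair C i j ?a \<omega>} \<le> 12 * card C / ?a\<^sup>2"
    using assms finite_columns by (intro prob_not_typical_pair_le) (auto simp: card_gt_0_iff)
  also have "12 * card C / ?a\<^sup>2 = 75 / (d\<^sup>2 * card C)"
    using assms by (simp add: field_simps power2_eq_square)
  finally show ?thesis
    by simp
qed

lemma prob_pair_event_ge:
  fixes d \<rho> :: real
  assumes "i \<in> R" "j \<in> R" "i \<noteq> j" "C \<noteq> {}" "0 < d" "d \<le> 1"
    and "0 < (\<Sum>l\<in>C. (s l)\<^sup>2)" "(\<Sum>l\<in>C. (s l)\<^sup>2) \<le> \<rho>"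
  shows "(Phi ((1 - d) * card C / sqrt \<rho>))\<^sup>2 - 75 / (d\<^sup>2 * card C) \<le> prob {\<omega> \<in> space M. pair_event C i j s \<omega>}"
proof -
  let ?a = "2/5 * d * card C"
  let ?rows = "{\<omega> \<in> space M. -((1 - d) * card C) \<le> (\<Sum>l\<in>C. s l * \<omega> (i, l))
      \<and> -((1 - d) * card C) \<le> (\<Sum>l\<in>C. s l * \<omega> (j, l))}"
  have "(Phi ((1 - d) * card C / sqrt \<rho>))\<^sup>2 \<le> prob ?rows"
  proof -
    have "(1 - d) * card C / sqrt \<rho> \<le> (1 - d) * card C / sqrt (\<Sum>l\<in>C. (s l)\<^sup>2)"
      using assms by (intro divide_left_mono) auto
    then show ?thesis
      using assms by (simp add: prob_row_forms_ge power_mono Phi_mono Phi_nonneg)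
  qed
  also have "?rows \<subseteq> {\<omega> \<in> space M. pair_event C i j s \<omega>} \<union> {\<omega> \<in> space M. \<not> typical_pair C i j ?a \<omega>}"
    using row_forms_ge_imp_pair_event[OF \<open>i \<noteq> j\<close>] by blast
  then have "prob ?rows \<le> prob {\<omega> \<in> space M. pair_event C i j s \<omega>} + prob {\<omega> \<in> space M. \<not> typical_pair C i j ?a \<omega>}"
    by (intro order_trans[OF finite_measure_mono measure_Un_le]) auto
  also have "prob {\<omega> \<in> space M. \<not> typical_pair C i j ?a \<omega>} \<le> 12 * card C / ?a\<^sup>2"
    using assms finite_columns by (intro prob_not_typical_pair_le) (auto simp: card_gt_0_iff)
  also have "12 * card C / ?a\<^sup>2 = 75 / (d\<^sup>2 * card C)"
    using assms by (simp add: field_simps power2_eq_square)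
  finally show ?thesis
    by simp
qed

lemma prob_pair_event_between:
  fixes d \<rho> :: real
  assumes "i \<in> R" "j \<in> R" "i \<noteq> j" "C \<noteq> {}" "0 < d" "d < 1" "0 < \<rho>"
    and "(1 - d) * \<rho> < (\<Sum>l\<in>C. (s l)\<^sup>2)" "(\<Sum>l\<in>C. (s l)\<^sup>2) < (1 + d) * \<rho>"
  shows "(Phi ((1 - d) * card C / sqrt ((1 + d) * \<rho>)))\<^sup>2 - 75 / (d\<^sup>2 * card C)
      \<le> prob {\<omega> \<in> space M. pair_event C i j s \<omega>}
    \<and> prob {\<omega> \<in> space M. pair_event C i j s \<omega>}
      \<le> (Phi ((1 + d) * card C / sqrt ((1 - d) * \<rho>)))\<^sup>2 + 75 / (d\<^sup>2 * card C)"
proof -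
  have "0 < (1 - d) * \<rho>"
    using assms(6,7) by simp
  moreover from this have "0 < (\<Sum>l\<in>C. (s l)\<^sup>2)"
    using assms(8) by linarith
  ultimately show ?thesis
    using prob_pair_event_ge[OF assms(1-5) less_imp_le[OF assms(6)] _ less_imp_le[OF assms(9)]]
      prob_pair_event_le[OF assms(1-5) _ less_imp_le[OF assms(8)]]
    by blast
qed

lemma
  fixes lo up :: real
  assumes "i \<in> R" "j \<in> R" "K \<subseteq> R - {i, j}" and B: "B \<in> sets (PiM (K \<times> C) (\<lambda>_. borel))"
    and "lo \<le> 1" "0 \<le> up"
    and slice: "\<And>y. y \<in> B \<Longrightarrow>
      lo \<le> prob {\<omega> \<in> space M. pair_event C i j (\<lambda>l. \<Sum>k\<in>K. y (k, l)) \<omega>} \<and>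
      prob {\<omega> \<in> space M. pair_event C i j (\<lambda>l. \<Sum>k\<in>K. y (k, l)) \<omega>} \<le> up"
  shows prob_pair_event_rest_ge:
      "lo - prob {\<omega> \<in> space M. restrict \<omega> (K \<times> C) \<notin> B}
        \<le> prob {\<omega> \<in> space M. pair_event C i j (\<lambda>l. \<Sum>k\<in>K. \<omega> (k, l)) \<omega>}"
    and prob_pair_event_rest_le:
      "prob {\<omega> \<in> space M. pair_event C i j (\<lambda>l. \<Sum>k\<in>K. \<omega> (k, l)) \<omega>}
        \<le> up + prob {\<omega> \<in> space M. restrict \<omega> (K \<times> C) \<notin> B}"
proof -
  let ?N = "\<lambda>J. PiM J (\<lambda>_. borel :: real measure)"
  define A where "A = {p \<in> space (?N (K \<times> C) \<Otimes>\<^sub>M ?N ({i, j} \<times> C)).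
    pair_event C i j (\<lambda>l. \<Sum>k\<in>K. fst p (k, l)) (snd p)}"
  have A: "A \<in> sets (?N (K \<times> C) \<Otimes>\<^sub>M ?N ({i, j} \<times> C))"
    unfolding A_def pair_event_def by measurable
  have "indep_var (?N (K \<times> C)) (\<lambda>\<omega>. id (restrict \<omega> (K \<times> C))) (?N ({i, j} \<times> C)) (\<lambda>\<omega>. id (restrict \<omega> ({i, j} \<times> C)))"
    using assms(1-3) by (intro indep_var_blocks) auto
  then have indep: "indep_var (?N (K \<times> C)) (\<lambda>\<omega>. restrict \<omega> (K \<times> C)) (?N ({i, j} \<times> C)) (\<lambda>\<omega>. restrict \<omega> ({i, j} \<times> C))"
    by simp
  have restrict_rows: "pair_event C i j s (restrict \<omega> ({i, j} \<times> C)) \<longleftrightarrow> pair_event C i j s \<omega>" for s \<omega>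
    by (simp add: pair_event_def cong: sum.cong)
  have restrict_rest: "pair_event C i j (\<lambda>l. \<Sum>k\<in>K. restrict \<omega> (K \<times> C) (k, l)) \<omega>
      \<longleftrightarrow> pair_event C i j (\<lambda>l. \<Sum>k\<in>K. \<omega> (k, l)) \<omega>" for \<omega>
    by (simp add: pair_event_def cong: sum.cong)
  have slice_eq: "{\<omega>' \<in> space M. (y, restrict \<omega>' ({i, j} \<times> C)) \<in> A}
      = {\<omega>' \<in> space M. pair_event C i j (\<lambda>l. \<Sum>k\<in>K. y (k, l)) \<omega>'}" if "y \<in> B" for y
    using sets.sets_into_space[OF B] that
    by (auto simp: A_def space_pair_measure space_PiM restrict_rows)
  have event_eq: "{\<omega> \<in> space M. (restrict \<omega> (K \<times> C), restrict \<omega> ({i, j} \<times> C)) \<in> A}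
      = {\<omega> \<in> space M. pair_event C i j (\<lambda>l. \<Sum>k\<in>K. \<omega> (k, l)) \<omega>}"
    by (auto simp: A_def space_pair_measure space_PiM restrict_rows restrict_rest simp del: restrict_apply)
  show "lo - prob {\<omega> \<in> space M. restrict \<omega> (K \<times> C) \<notin> B}
      \<le> prob {\<omega> \<in> space M. pair_event C i j (\<lambda>l. \<Sum>k\<in>K. \<omega> (k, l)) \<omega>}"
    using prob_indep_pair_ge[OF indep A B \<open>lo \<le> 1\<close>] slice slice_eq by (simp add: event_eq)
  show "prob {\<omega> \<in> space M. pair_event C i j (\<lambda>l. \<Sum>k\<in>K. \<omega> (k, l)) \<omega>}
      \<le> up + prob {\<omega> \<in> space M. restrict \<omega> (K \<times> C) \<notin> B}"
    using prob_indep_pair_le[OF indep A B \<open>0 \<le> up\<close>] slice slice_eq by (simp add: event_eq)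
qed

lemma
  fixes d :: real
  assumes "i \<in> R" "j \<in> R" "i \<noteq> j" "K \<subseteq> R - {i, j}" "finite K" "K \<noteq> {}" "C \<noteq> {}" "0 < d" "d < 1"
  defines "\<rho> \<equiv> real (card C * card K)"
  shows prob_pair_event_column_sums_ge:
      "(Phi ((1 - d) * card C / sqrt ((1 + d) * \<rho>)))\<^sup>2 - 77 / (d\<^sup>2 * card C)
        \<le> prob {\<omega> \<in> space M. pair_event C i j (\<lambda>l. \<Sum>k\<in>K. \<omega> (k, l)) \<omega>}"
    and prob_pair_event_column_sums_le:
      "prob {\<omega> \<in> space M. pair_event C i j (\<lambda>l. \<Sum>k\<in>K. \<omega> (k, l)) \<omega>}
        \<le> (Phi ((1 + d) * card C / sqrt ((1 - d) * \<rho>)))\<^sup>2 + 77 / (d\<^sup>2 * card C)"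
proof -
  have "0 < \<rho>"
    using assms(5-7) finite_columns by (simp add: \<rho>_def card_gt_0_iff)
  define B where "B = {y \<in> space (PiM (K \<times> C) (\<lambda>_. borel)). \<bar>row_sum_sqnorm C K y - \<rho>\<bar> < d * \<rho>}"
  have B: "B \<in> sets (PiM (K \<times> C) (\<lambda>_. borel))"
    unfolding B_def by measurable
  have "row_sum_sqnorm C K (restrict \<omega> (K \<times> C)) = row_sum_sqnorm C K \<omega>" for \<omega>
    by (simp add: row_sum_sqnorm_def cong: sum.cong)
  then have "{\<omega> \<in> space M. restrict \<omega> (K \<times> C) \<notin> B}
      = {\<omega> \<in> space M. d * (card C * card K) \<le> \<bar>row_sum_sqnorm C K \<omega> - card C * card K\<bar>}"
    by (auto simp: B_def space_PiM \<rho>_def not_less)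
  then have outside: "prob {\<omega> \<in> space M. restrict \<omega> (K \<times> C) \<notin> B} \<le> 2 / (d\<^sup>2 * card C)"
    using prob_row_sum_sqnorm_relative_deviation_le[of K d] assms by auto
  define lo where "lo = (Phi ((1 - d) * card C / sqrt ((1 + d) * \<rho>)))\<^sup>2 - 75 / (d\<^sup>2 * card C)"
  define up where "up = (Phi ((1 + d) * card C / sqrt ((1 - d) * \<rho>)))\<^sup>2 + 75 / (d\<^sup>2 * card C)"
  have "lo \<le> prob {\<omega> \<in> space M. pair_event C i j (\<lambda>l. \<Sum>k\<in>K. y (k, l)) \<omega>}
      \<and> prob {\<omega> \<in> space M. pair_event C i j (\<lambda>l. \<Sum>k\<in>K. y (k, l)) \<omega>} \<le> up" if "y \<in> B" for y
    unfolding lo_def up_def using that assms \<open>0 < \<rho>\<close>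
    by (intro prob_pair_event_between) (auto simp: B_def row_sum_sqnorm_def abs_less_iff algebra_simps)
  moreover have "lo \<le> 1" and "0 \<le> up"
    unfolding lo_def up_def using power_le_one[OF Phi_nonneg Phi_le_1, where n = 2] zero_le_power2
    by (smt (verit) divide_nonneg_nonneg mult_nonneg_nonneg of_nat_0_le_iff)+
  ultimately have "lo - 2 / (d\<^sup>2 * card C) \<le> prob {\<omega> \<in> space M. pair_event C i j (\<lambda>l. \<Sum>k\<in>K. \<omega> (k, l)) \<omega>}"
    and "prob {\<omega> \<in> space M. pair_event C i j (\<lambda>l. \<Sum>k\<in>K. \<omega> (k, l)) \<omega>} \<le> up + 2 / (d\<^sup>2 * card C)"
    using prob_pair_event_rest_ge[OF assms(1,2,4) B, of lo up] prob_pair_event_rest_le[OF assms(1,2,4) B, of lo up]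
      outside by fastforce+
  moreover have "77 / (d\<^sup>2 * card C) = 75 / (d\<^sup>2 * card C) + 2 / (d\<^sup>2 * card C)"
    by (simp add: add_divide_distrib[symmetric])
  ultimately show "(Phi ((1 - d) * card C / sqrt ((1 + d) * \<rho>)))\<^sup>2 - 77 / (d\<^sup>2 * card C)
        \<le> prob {\<omega> \<in> space M. pair_event C i j (\<lambda>l. \<Sum>k\<in>K. \<omega> (k, l)) \<omega>}"
    and "prob {\<omega> \<in> space M. pair_event C i j (\<lambda>l. \<Sum>k\<in>K. \<omega> (k, l)) \<omega>}
        \<le> (Phi ((1 + d) * card C / sqrt ((1 - d) * \<rho>)))\<^sup>2 + 77 / (d\<^sup>2 * card C)"
    unfolding lo_def up_def by linarith+
qed

end

lemma measure_row_events_bounds: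
  fixes d :: real
  assumes "i < m" "j < m" "i \<noteq> j" "3 \<le> m" "0 < n" "0 < d" "d < 1"
  shows "(Phi ((1 - d) * n / sqrt ((1 + d) * (n * (real m - 2)))))\<^sup>2 - 77 / (d\<^sup>2 * n)
      \<le> measure (gauss_matrix m n) (row_event m n i \<inter> row_event m n j)"
    and "measure (gauss_matrix m n) (row_event m n i \<inter> row_event m n j)
      \<le> (Phi ((1 + d) * n / sqrt ((1 - d) * (n * (real m - 2)))))\<^sup>2 + 77 / (d\<^sup>2 * n)"
proof -
  interpret std_normal_matrix "gauss_matrix m n" "{..<m}" "{..<n}"
    by (simp add: std_normal_matrix_def std_normal_matrix_axioms_def iid_std_normal_def
        iid_std_normal_axioms_def gauss_matrix_def prob_space_PiM prob_space_std_normal)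
  define K where "K = {..<m} - {i, j}"
  have K: "{..<m} = insert i (insert j K)" "i \<notin> K" "j \<notin> K" "finite K" "K \<subseteq> {..<m} - {i, j}"
    using assms(1,2) by (auto simp: K_def)
  have "card K = m - 2"
    using assms(1-3) by (simp add: K_def card_Diff_subset)
  then have "K \<noteq> {}" and \<rho>: "real (card {..<n} * card K) = n * (real m - 2)"
    using assms(4) by auto
  have "row_event m n i \<inter> row_event m n j
      = {\<omega> \<in> space (gauss_matrix m n). pair_event {..<n} i j (\<lambda>l. \<Sum>k\<in>K. \<omega> (k, l)) \<omega>}"
    using K(2-4) assms(3) by (auto simp: row_event_def K(1) pair_event_def add.assoc)
  then show "(Phi ((1 - d) * n / sqrt ((1 + d) * (n * (real m - 2)))))\<^sup>2 - 77 / (d\<^sup>2 * n)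
      \<le> measure (gauss_matrix m n) (row_event m n i \<inter> row_event m n j)"
    and "measure (gauss_matrix m n) (row_event m n i \<inter> row_event m n j)
      \<le> (Phi ((1 + d) * n / sqrt ((1 - d) * (n * (real m - 2)))))\<^sup>2 + 77 / (d\<^sup>2 * n)"
    using prob_pair_event_column_sums_ge[of i j K d] prob_pair_event_column_sums_le[of i j K d]
      assms K \<open>K \<noteq> {}\<close> unfolding \<rho> by (simp_all add: lessThan_empty_iff)
qed

lemma tendsto_row_events_bounds:
  fixes c :: real and N :: "nat \<Rightarrow> nat"
  assumes "0 < c" and "filterlim N at_top sequentially"
  defines "\<delta> \<equiv> \<lambda>t. real (N t) powr (-1/4)"
  shows "(\<lambda>t. (Phi ((1 - \<delta> t) * real (N t) / sqrt ((1 + \<delta> t) * (real (N t) * (c * real (N t) - 2)))))\<^sup>2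
      - 77 / ((\<delta> t)\<^sup>2 * real (N t))) \<longlonglongrightarrow> (Phi (1 / sqrt c))\<^sup>2"
    and "(\<lambda>t. (Phi ((1 + \<delta> t) * real (N t) / sqrt ((1 - \<delta> t) * (real (N t) * (c * real (N t) - 2)))))\<^sup>2
      + 77 / ((\<delta> t)\<^sup>2 * real (N t))) \<longlonglongrightarrow> (Phi (1 / sqrt c))\<^sup>2"
proof -
  have N: "filterlim (\<lambda>t. real (N t)) at_top sequentially"
    using filterlim_compose[OF filterlim_real_sequentially assms(2)] .
  have Phi_squared: "(\<lambda>t. (Phi (f (N t)))\<^sup>2) \<longlonglongrightarrow> (Phi (1 / sqrt c))\<^sup>2"
    if "(f \<longlongrightarrow> 1 / sqrt c) at_top" for f :: "real \<Rightarrow> real"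
    using isCont_tendsto_compose[OF isCont_Phi filterlim_compose[OF that N]] by (rule tendsto_power)
  have lower: "((\<lambda>x. (1 - x powr (-1/4)) * x / sqrt ((1 + x powr (-1/4)) * (x * (c * x - 2)))) \<longlongrightarrow> 1 / sqrt c) at_top"
    and upper: "((\<lambda>x. (1 + x powr (-1/4)) * x / sqrt ((1 - x powr (-1/4)) * (x * (c * x - 2)))) \<longlongrightarrow> 1 / sqrt c) at_top"
    using \<open>0 < c\<close> by (real_asymp simp: powr_half_sqrt inverse_eq_divide)+
  have error: "((\<lambda>x::real. 77 / ((x powr (-1/4))\<^sup>2 * x)) \<longlongrightarrow> 0) at_top"
    by real_asymp
  from tendsto_diff[OF Phi_squared[OF lower] filterlim_compose[OF error N]]
    tendsto_add[OF Phi_squared[OF upper] filterlim_compose[OF error N]]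
  show "(\<lambda>t. (Phi ((1 - \<delta> t) * real (N t) / sqrt ((1 + \<delta> t) * (real (N t) * (c * real (N t) - 2)))))\<^sup>2
      - 77 / ((\<delta> t)\<^sup>2 * real (N t))) \<longlonglongrightarrow> (Phi (1 / sqrt c))\<^sup>2"
    and "(\<lambda>t. (Phi ((1 + \<delta> t) * real (N t) / sqrt ((1 - \<delta> t) * (real (N t) * (c * real (N t) - 2)))))\<^sup>2
      + 77 / ((\<delta> t)\<^sup>2 * real (N t))) \<longlonglongrightarrow> (Phi (1 / sqrt c))\<^sup>2"
    unfolding \<delta>_def diff_zero add_0_right .
qed

theorem lemma4:
  fixes c :: real and i j :: nat and m n :: "nat \<Rightarrow> nat"
  assumes "c > 0" and "i \<noteq> j"
    and "filterlim m at_top sequentially" and "filterlim n at_top sequentially"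
    and "\<And>t. real (m t) = c * real (n t)"
  shows "(\<lambda>t. measure (gauss_matrix (m t) (n t))
              (row_event (m t) (n t) i \<inter> row_event (m t) (n t) j))
         \<longlonglongrightarrow> 1/4 * (erfc (- 1 / sqrt (2 * c)))^2"
proof -
  define \<delta> :: "nat \<Rightarrow> real" where "\<delta> t = real (n t) powr (-1/4)" for t
  define lower where "lower t = (Phi ((1 - \<delta> t) * n t / sqrt ((1 + \<delta> t) * (n t * (c * n t - 2)))))\<^sup>2
    - 77 / ((\<delta> t)\<^sup>2 * n t)" for t
  define upper where "upper t = (Phi ((1 + \<delta> t) * n t / sqrt ((1 - \<delta> t) * (n t * (c * n t - 2)))))\<^sup>2
    + 77 / ((\<delta> t)\<^sup>2 * n t)" for t
  let ?p = "\<lambda>t. measure (gauss_matrix (m t) (n t)) (row_event (m t) (n t) i \<inter> row_event (m t) (n t) j)"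
  have "eventually (\<lambda>t. max i j + 3 \<le> m t \<and> 2 \<le> n t) sequentially"
    using assms(3,4) by (simp add: filterlim_at_top eventually_conj_iff)
  then have "eventually (\<lambda>t. lower t \<le> ?p t \<and> ?p t \<le> upper t) sequentially"
  proof eventually_elim
    case (elim t)
    moreover have "0 < \<delta> t" "\<delta> t < 1"
      using elim unfolding \<delta>_def by (simp_all add: powr_less_one)
    ultimately show ?case
      using measure_row_events_bounds[of i "m t" j "n t" "\<delta> t"] assms(2)
      unfolding lower_def upper_def assms(5) by auto
  qed
  then have "eventually (\<lambda>t. lower t \<le> ?p t) sequentially" "eventually (\<lambda>t. ?p t \<le> upper t) sequentially"
    by (auto elim: eventually_mono)
  moreover have "lower \<longlonglongrightarrow> (Phi (1 / sqrt c))\<^sup>2" "upper \<longlonglongrightarrow> (Phi (1 / sqrt c))\<^sup>2"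
    unfolding lower_def[abs_def] upper_def[abs_def] \<delta>_def
    using tendsto_row_events_bounds[OF \<open>0 < c\<close> assms(4)] .
  ultimately have "?p \<longlonglongrightarrow> (Phi (1 / sqrt c))\<^sup>2"
    by (rule tendsto_sandwich)
  moreover have "Phi (1 / sqrt c) = erfc (- 1 / sqrt (2 * c)) / 2"
    using Phi_eq_erfc[of "1 / sqrt c"] \<open>0 < c\<close> by (simp add: real_sqrt_mult mult.commute)
  ultimately show ?thesis
    by (simp add: power_divide)
qed

end
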